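(* Let $q>7$ be a prime and $a$ a positive integer. Then $$\nu_q\Big(\prod_{p\le a}(p-1)\Big)\le \frac{0.23\,a}{q-1}+\frac{7\log a}{\log q},$$ where the product is over primes $p\le a$.
   Context: For a prime $q$ and nonzero integer $n$, $\nu_q(n)$ denotes the exponent of $q$ in the prime factorisation of $n$. The letter $p$ denotes primes. *)

theory Defs
  imports "HOL-Computational_Algebra.Primes" Complex_Main
begin

end

theory Submission
  imports Defs "HOL-Number_Theory.Cong"
begin

(* Writing the multiplicity of q in p - 1 as the number of k with q^k dividing p - 1 gives
   nu_q(prod (p - 1)) = sum_k #{p <= a prime : q^k | p - 1}.  For q^k <= a such primes are
   p = 1 + 2 q^k i with i <= a / (2 q^k) and, being larger than 7, coprime to 105.  Sieving the
   progression 1 + 2 q^k i by 3, 5 and 7 leaves at most 48/105 of the i up to an error of 7,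
   so the k-th term is at most (8/35) a / q^k + 7.  Summing the geometric series gives
   8/35 < 0.23 in the first term, and there are at most log a / log q values of k with q^k <= a. *)

lemma card_dvd_affine_upper:
  fixes b c d I :: nat
  assumes "coprime b d" and "d > 0"
  shows "d * card {i\<in>{1..I}. d dvd c + b * i} \<le> I + d"
proof -
  let ?S = "{i\<in>{1..I}. d dvd c + b * i}"
  have "inj_on (\<lambda>i. i div d) ?S"
  proof (rule inj_onI)
    fix x y assume "x \<in> ?S" "y \<in> ?S" and div_eq: "x div d = y div d"
    then have "[c + b * x = c + b * y] (mod d)"
      by (metis (no_types, lifting) cong_0_iff cong_sym cong_trans mem_Collect_eq)
    then have "[x = y] (mod d)"
      using assms(1) by (simp add: cong_add_lcancel_nat cong_mult_lcancel_nat)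
    then show "x = y"
      using div_eq by (metis cong_def div_mult_mod_eq)
  qed
  moreover have "(\<lambda>i. i div d) ` ?S \<subseteq> {..I div d}"
    by (auto intro: div_le_mono)
  ultimately have "card ?S \<le> I div d + 1"
    using card_inj_on_le[of "\<lambda>i. i div d" ?S "{..I div d}"] by simp
  then have "d * card ?S \<le> d * (I div d) + d"
    by (metis add_mult_distrib2 mult.right_neutral mult_le_mono2)
  also have "\<dots> \<le> I + d" by simp
  finally show ?thesis .
qed

lemma card_dvd_affine_lower:
  fixes b c d I :: nat
  assumes "coprime b d" and "d > 0"
  shows "I div d \<le> card {i\<in>{1..I}. d dvd c + b * i}"
proof -
  let ?S = "{i\<in>{1..I}. d dvd c + b * i}"
  obtain y where y: "[b * y = 1] (mod d)"
    using cong_solve_coprime_nat[OF assms(1)] by auto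
  define x' where "x' = y * ((d - 1) * c)"
  (* b * x' is congruent to (d - 1) * c, that is to -c *)
  have "[c + b * x' = c + 1 * ((d - 1) * c)] (mod d)"
    unfolding x'_def mult.assoc[symmetric] by (intro cong_add cong_mult y cong_refl)
  moreover have "c + 1 * ((d - 1) * c) = d * c" using assms(2) by (cases d) auto
  ultimately have "d dvd c + b * x'" by (simp add: cong_0_iff cong_dvd_iff)
  define x where "x = (if x' mod d = 0 then d else x' mod d)"
  have x_range: "x \<in> {1..d}"
    unfolding x_def using assms(2) by (auto simp: less_imp_le)
  have "[c + b * x = c + b * x'] (mod d)"
    unfolding x_def by (intro cong_add cong_mult cong_refl) (auto simp: cong_def)
  with \<open>d dvd c + b * x'\<close> have x_dvd: "d dvd c + b * x"
    by (simp add: cong_dvd_iff)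
  have "inj_on (\<lambda>t. x + d * t) {..<I div d}" using assms(2) by (auto simp: inj_on_def)
  moreover have "(\<lambda>t. x + d * t) ` {..<I div d} \<subseteq> ?S"
  proof (rule image_subsetI)
    fix t assume "t \<in> {..<I div d}"
    have "x + d * t \<le> d * Suc t" using x_range by simp
    also have "\<dots> \<le> d * (I div d)" using \<open>t \<in> {..<I div d}\<close> by (intro mult_le_mono2) simp
    also have "\<dots> \<le> I" by simp
    finally have "x + d * t \<le> I" .
    moreover have "d dvd (c + b * x) + d * (b * t)" using x_dvd by simp
    then have "d dvd c + b * (x + d * t)" by (simp add: algebra_simps)
    ultimately show "x + d * t \<in> ?S"
      using x_range by simp
  qed
  ultimately show ?thesis
    using card_inj_on_le[of "\<lambda>t. x + d * t" "{..<I div d}" ?S] by simp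
qed

lemma card_Un3_inclusion_exclusion:
  assumes "finite A" "finite B" "finite C"
  shows "int (card (A \<union> B \<union> C)) = int (card A) + int (card B) + int (card C)
    - int (card (A \<inter> B)) - int (card (A \<inter> C)) - int (card (B \<inter> C)) + int (card (A \<inter> B \<inter> C))"
proof -
  have "(A \<union> B) \<inter> C = (A \<inter> C) \<union> (B \<inter> C)" and "(A \<inter> C) \<inter> (B \<inter> C) = A \<inter> B \<inter> C"
    by blast+
  then show ?thesis
    using card_Un_Int[OF assms(1,2)] card_Un_Int[of "A \<union> B" C] card_Un_Int[of "A \<inter> C" "B \<inter> C"] assms
    by simp
qed

lemma coprime_prime_right_iff:
  fixes p x :: nat
  assumes "prime p"
  shows "coprime x p \<longleftrightarrow> \<not> p dvd x"
  using assms by (metis coprime_commute prime_imp_coprime coprime_absorb_left not_prime_unit)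

lemma coprime_105_iff:
  fixes x :: nat
  shows "coprime x 105 \<longleftrightarrow> \<not> 3 dvd x \<and> \<not> 5 dvd x \<and> \<not> 7 dvd x"
  using coprime_mult_right_iff[of x "3 * 5" 7] coprime_mult_right_iff[of x 3 5]
    coprime_prime_right_iff[of 3 x] coprime_prime_right_iff[of 5 x] coprime_prime_right_iff[of 7 x]
  by simp

(* Inclusion-exclusion over 3, 5 and 7: 48 = totient 105, and 735 = 7 * 105 absorbs the rounding errors. *)
lemma card_coprime_105_affine:
  fixes b c I :: nat
  assumes "coprime b 105"
  shows "105 * card {i\<in>{1..I}. coprime (c + b * i) 105} \<le> 48 * I + 735"
proof -
  define D where "D d = {i\<in>{1..I}. d dvd c + b * i}" for d :: nat
  have fin: "finite (D d)" for d unfolding D_def by simp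
  have coprime_b: "coprime b d" if "d dvd 105" for d
    using coprime_divisors[OF dvd_refl that assms] .
  have pos: "d > 0" if "d dvd 105" for d :: nat
    using that by (cases d) auto
  have lower: "I div d \<le> card (D d)" if "d dvd 105" for d
    unfolding D_def by (rule card_dvd_affine_lower[OF coprime_b[OF that] pos[OF that]])
  have upper: "d * card (D d) \<le> I + d" if "d dvd 105" for d
    unfolding D_def by (rule card_dvd_affine_upper[OF coprime_b[OF that] pos[OF that]])
  have Int: "D m \<inter> D n = D (m * n)" if "coprime m n" for m n
    unfolding D_def using that by (auto intro: divides_mult dest: dvd_mult_left dvd_mult_right)
  have "{i\<in>{1..I}. coprime (c + b * i) 105} = {1..I} - (D 3 \<union> D 5 \<union> D 7)"
    unfolding D_def coprime_105_iff by blast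
  moreover have "D 3 \<union> D 5 \<union> D 7 \<subseteq> {1..I}" unfolding D_def by blast
  ultimately have "card {i\<in>{1..I}. coprime (c + b * i) 105} = I - card (D 3 \<union> D 5 \<union> D 7)"
    and "card (D 3 \<union> D 5 \<union> D 7) \<le> I"
    using fin card_mono[of "{1..I}"] by (simp_all add: card_Diff_subset)
  moreover have "int (card (D 3 \<union> D 5 \<union> D 7)) = int (card (D 3)) + int (card (D 5)) + int (card (D 7))
      - int (card (D 15)) - int (card (D 21)) - int (card (D 35)) + int (card (D 105))"
  proof -
    have "coprime (3::nat) 5" "coprime (3::nat) 7" "coprime (5::nat) 7" "coprime (15::nat) 7"
      by (simp_all add: coprime_iff_gcd_eq_1 gcd_non_0_nat)
    then show ?thesis
      using card_Un3_inclusion_exclusion[OF fin fin fin] by (simp add: Int)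
  qed
  moreover have "I div 3 \<le> card (D 3)" "I div 5 \<le> card (D 5)" "I div 7 \<le> card (D 7)"
    "I div 105 \<le> card (D 105)" by (simp_all add: lower)
  moreover have "15 * card (D 15) \<le> I + 15" "21 * card (D 21) \<le> I + 21" "35 * card (D 35) \<le> I + 35"
    by (simp_all add: upper)
  moreover have "I \<le> 3 * (I div 3) + 2" "I \<le> 5 * (I div 5) + 4" "I \<le> 7 * (I div 7) + 6"
    "I \<le> 105 * (I div 105) + 104" by simp_all
  ultimately show ?thesis by linarith
qed

lemma prime_gt_7_coprime_210:
  fixes p :: nat
  assumes "prime p" and "7 < p"
  shows "coprime p 210"
proof (rule prime_imp_coprime[OF assms(1)])
  show "\<not> p dvd 210"
  proof
    assume "p dvd 210"
    then have "p dvd 2 * (3 * (5 * 7))" by simp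
    then have "p dvd 2 \<or> p dvd 3 \<or> p dvd 5 \<or> p dvd 7"
      using assms(1) by (metis prime_dvd_mult_iff)
    then show False using assms(2) by (auto dest: dvd_imp_le)
  qed
qed

(* Such a prime exceeds 7, so it is odd and coprime to 105; hence p = 1 + 2 Q i with 1 <= i <= a div (2 Q). *)
lemma card_primes_dvd_pred_le:
  fixes Q a :: nat
  assumes "coprime Q 210" and "7 \<le> Q"
  shows "105 * card {p. prime p \<and> p \<le> a \<and> Q dvd p - 1} \<le> 48 * (a div (2 * Q)) + 735"
proof -
  define I where "I = a div (2 * Q)"
  let ?A = "{p. prime p \<and> p \<le> a \<and> Q dvd p - 1}"
  let ?G = "{i\<in>{1..I}. coprime (1 + 2 * Q * i) 105}"
  let ?index = "\<lambda>p. (p - 1) div (2 * Q)"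
  have "coprime 2 Q" and "coprime (2 * Q) 105"
    using coprime_divisors[OF dvd_refl _ assms(1), of 105] coprime_divisors[OF dvd_refl _ assms(1), of 2]
    by (simp_all add: coprime_commute)
  have index: "p = 1 + 2 * Q * ?index p \<and> ?index p \<in> ?G" if "p \<in> ?A" for p
  proof -
    from that have p: "prime p" "p \<le> a" "Q dvd p - 1" by auto
    then have "Q \<le> p - 1" using prime_gt_1_nat[of p] by (intro dvd_imp_le) auto
    then have "7 < p" using assms(2) by linarith
    then have "odd p" using p(1) prime_odd_nat by auto
    then have "2 * Q dvd p - 1"
      using p(3) \<open>coprime 2 Q\<close> prime_gt_1_nat[OF p(1)] by (intro divides_mult) auto
    then obtain i where "p - 1 = 2 * Q * i" ..
    then have "?index p = i" and p_eq: "p = 1 + 2 * Q * i" using \<open>7 < p\<close> assms(2) by auto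
    moreover have "i \<ge> 1" using p_eq \<open>7 < p\<close> by (cases i) auto
    moreover have "i \<le> I"
    proof -
      have "(2 * Q * i) div (2 * Q) \<le> I"
        unfolding I_def using p_eq p(2) by (intro div_le_mono) linarith
      then show ?thesis using assms(2) by simp
    qed
    moreover have "coprime p 105"
      using coprime_divisors[OF dvd_refl _ prime_gt_7_coprime_210[OF p(1) \<open>7 < p\<close>], of 105] by simp
    ultimately show ?thesis by simp
  qed
  have "inj_on ?index ?A"
    by (rule inj_onI) (metis index)
  moreover have "?index ` ?A \<subseteq> ?G" using index by blast
  ultimately have "card ?A \<le> card ?G" by (intro card_inj_on_le) auto
  moreover have "105 * card ?G \<le> 48 * I + 735"
    by (rule card_coprime_105_affine) fact
  ultimately show ?thesis unfolding I_def by linarith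
qed

lemma card_primes_dvd_pred_real_le:
  fixes Q a :: nat
  assumes "coprime Q 210" and "7 \<le> Q"
  shows "real (card {p. prime p \<and> p \<le> a \<and> Q dvd p - 1})
           \<le> 8 / 35 * real a / real Q + (if Q \<le> a then 7 else 0)"
proof (cases "Q \<le> a")
  case True
  have "real (105 * card {p. prime p \<and> p \<le> a \<and> Q dvd p - 1}) \<le> real (48 * (a div (2 * Q)) + 735)"
    using card_primes_dvd_pred_le[OF assms] by (simp only: of_nat_le_iff)
  moreover have "real (a div (2 * Q)) \<le> real a / real (2 * Q)"
    by (rule of_nat_div_le_of_nat)
  moreover have "real a / real (2 * Q) = (real a / real Q) / 2" by simp
  ultimately show ?thesis using True by simp
next
  case False
  have pred_bound: "Q \<le> p - 1" if "prime p" "Q dvd p - 1" for p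
    using that prime_gt_1_nat[OF that(1)] by (intro dvd_imp_le) auto
  then have no_primes: "{p. prime p \<and> p \<le> a \<and> Q dvd p - 1} = {}"
    using False by (auto dest!: pred_bound)
  show ?thesis unfolding no_primes using False by simp
qed

lemma multiplicity_eq_card_power_dvd:
  fixes q n a :: nat
  assumes "1 < q" and "0 < n" and "n \<le> a"
  shows "multiplicity q n = card {k\<in>{1..a}. q ^ k dvd n}"
proof -
  define m where "m = multiplicity q n"
  have power_dvd_iff: "q ^ k dvd n \<longleftrightarrow> k \<le> m" for k
    unfolding m_def using assms(1,2) by (intro power_dvd_iff_le_multiplicity) auto
  have "m < 2 ^ m" by (rule less_exp)
  also have "\<dots> \<le> q ^ m" using assms(1) by (intro power_mono) auto
  also have "\<dots> \<le> n" using power_dvd_iff[of m] assms(2) by (intro dvd_imp_le) auto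
  finally have "m \<le> a" using assms(3) by linarith
  then have "{k\<in>{1..a}. q ^ k dvd n} = {1..m}"
    unfolding power_dvd_iff by auto
  then show ?thesis unfolding m_def by simp
qed

lemma multiplicity_prod_eq_sum_card:
  fixes q a :: nat and f :: "'a \<Rightarrow> nat"
  assumes "prime q" and "finite A" and "\<And>x. x \<in> A \<Longrightarrow> 0 < f x \<and> f x \<le> a"
  shows "multiplicity q (\<Prod>x\<in>A. f x) = (\<Sum>k=1..a. card {x\<in>A. q ^ k dvd f x})"
proof -
  have "multiplicity q (\<Prod>x\<in>A. f x) = (\<Sum>x\<in>A. multiplicity q (f x))"
    using assms by (intro prime_elem_multiplicity_prod_distrib) (auto dest: assms(3))
  also have "\<dots> = (\<Sum>x\<in>A. card {k\<in>{1..a}. q ^ k dvd f x})"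
    using assms prime_gt_1_nat by (intro sum.cong multiplicity_eq_card_power_dvd) auto
  also have "\<dots> = (\<Sum>x\<in>A. \<Sum>k=1..a. if q ^ k dvd f x then 1 else 0)"
    by (simp add: sum.If_cases Int_def)
  also have "\<dots> = (\<Sum>k=1..a. \<Sum>x\<in>A. if q ^ k dvd f x then 1 else 0)"
    by (rule sum.swap)
  also have "\<dots> = (\<Sum>k=1..a. card {x\<in>A. q ^ k dvd f x})"
    using assms(2) by (simp add: sum.If_cases Int_def)
  finally show ?thesis .
qed

lemma sum_inverse_powers_le:
  fixes q :: real and n :: nat
  assumes "1 < q"
  shows "(\<Sum>k=1..n. 1 / q ^ k) \<le> 1 / (q - 1)"
proof -
  have "(\<Sum>k=1..n. 1 / q ^ k) = (1 / q - (1 / q) ^ Suc n) / (1 - 1 / q)"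
    using assms sum_gp[of "1 / q" 1 n] by (auto simp: power_one_over)
  also have "\<dots> \<le> (1 / q) / (1 - 1 / q)"
    using assms by (intro divide_right_mono) auto
  also have "\<dots> = 1 / (q - 1)" using assms by (simp add: field_simps)
  finally show ?thesis .
qed

lemma card_powers_le_ln_div_ln:
  fixes q a :: nat
  assumes "1 < q" and "0 < a"
  shows "real (card {k\<in>{1..a}. q ^ k \<le> a}) \<le> ln (real a) / ln (real q)"
proof -
  define x where "x = ln (real a) / ln (real q)"
  have "real k \<le> x" if "q ^ k \<le> a" for k
  proof -
    have "real k * ln (real q) = ln (real (q ^ k))" using assms(1) by (simp add: ln_realpow)
    also have "\<dots> \<le> ln (real a)" using that assms by simp
    finally show ?thesis unfolding x_def using assms(1) by (simp add: field_simps)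
  qed
  then have "{k\<in>{1..a}. q ^ k \<le> a} \<subseteq> {1..nat \<lfloor>x\<rfloor>}"
    by (auto simp: le_nat_floor)
  then have "card {k\<in>{1..a}. q ^ k \<le> a} \<le> nat \<lfloor>x\<rfloor>"
    using card_mono[of "{1..nat \<lfloor>x\<rfloor>}"] by fastforce
  moreover have "0 \<le> x" unfolding x_def using assms by simp
  ultimately show ?thesis unfolding x_def[symmetric] by linarith
qed

theorem lemma5p1:
  fixes q a :: nat
  assumes "prime q" and "q > 7" and "a > 0"
  shows "real (multiplicity q (\<Prod>p\<in>{p. prime p \<and> p \<le> a}. p - 1))
           \<le> 0.23 * real a / (real q - 1) + 7 * ln (real a) / ln (real q)"
proof -
  have q: "1 < real q" "coprime q 210" using assms prime_gt_7_coprime_210 by auto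
  have card_bound: "real (card {p. prime p \<and> p \<le> a \<and> q ^ k dvd p - 1})
      \<le> 8 / 35 * real a / real q ^ k + (if q ^ k \<le> a then 7 else 0)" if "k \<in> {1..a}" for k
    using card_primes_dvd_pred_real_le[of "q ^ k" a] self_le_power[of q k] that q(2) assms(2)
    by (simp add: coprime_power_left_iff)
  have "real (multiplicity q (\<Prod>p\<in>{p. prime p \<and> p \<le> a}. p - 1))
          = (\<Sum>k=1..a. real (card {p. prime p \<and> p \<le> a \<and> q ^ k dvd p - 1}))"
    using assms(1) prime_gt_1_nat
    by (subst multiplicity_prod_eq_sum_card[where a = a]) (auto simp: conj_assoc)
  also have "\<dots> \<le> (\<Sum>k=1..a. 8 / 35 * real a / real q ^ k + (if q ^ k \<le> a then 7 else 0))"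
    by (rule sum_mono) (rule card_bound)
  also have "\<dots> = 8 / 35 * real a * (\<Sum>k=1..a. 1 / real q ^ k) + 7 * real (card {k\<in>{1..a}. q ^ k \<le> a})"
    by (simp add: sum.distrib sum_distrib_left sum.If_cases Int_def)
  also have "\<dots> \<le> 8 / 35 * real a * (1 / (real q - 1)) + 7 * (ln (real a) / ln (real q))"
    using sum_inverse_powers_le[OF q(1)] card_powers_le_ln_div_ln[of q a] assms
    by (intro add_mono mult_left_mono) auto
  also have "\<dots> \<le> 0.23 * real a / (real q - 1) + 7 * ln (real a) / ln (real q)"
    using divide_right_mono[of "8 / 35 * real a" "0.23 * real a" "real q - 1"] q(1) by simp
  finally show ?thesis .
qed

end
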